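(* Let $K$ be the transition kernel of a Markov chain on a general measurable state space $(\mathcal X,\mathcal B(\mathcal X))$ that is reversible with respect to a probability measure $\pi$. Let $\mu_0\ll\pi$ be an initial distribution with $\chi(\mu_0\|\pi)<\infty$, let $h_0=d\mu_0/d\pi$, and let $\mu_n$ be the law of the chain after $n$ steps. Then for all $n\in\mathbb N$, $$\chi(\mu_n\|\pi)^2\ge\chi(\mu_0\|\pi)^2\Big(1-\frac{\mathcal E_{K^2}(h_0,h_0)}{\chi(\mu_0\|\pi)^2}\Big)^n.$$
   Context: Reversibility: $K(x,dy)\pi(dx)=K(y,dx)\pi(dy)$. $K^n$ is the $n$-step kernel, $K^n(x,dy)=\int K^{n-1}(x,dz)K(z,dy)$, and $\mu_n(S)=\int\mu_0(dx)K^n(x,S)$. For $\mu\ll\pi$, $\chi(\mu\|\pi):=\big(\int(\frac{d\mu}{d\pi}-1)^2d\pi\big)^{1/2}$ (so $\chi(\mu\|\pi)^2$ is the $\chi^2$-divergence). For a kernel $P$ reversible w.r.t. $\pi$ and $g\in L_2(\pi)$, the Dirichlet form is $\mathcal E_P(g,g)=\frac12\iint(g(x)-g(y))^2P(x,dy)\pi(dx)$. *)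

theory Defs
  imports "HOL-Probability.Probability"
begin

definition reversible :: "'a measure \<Rightarrow> ('a \<Rightarrow> 'a measure) \<Rightarrow> bool" where
  "reversible \<pi> K \<longleftrightarrow>
     (\<forall>A\<in>sets \<pi>. \<forall>B\<in>sets \<pi>.
        (\<integral>\<^sup>+x. indicator A x * emeasure (K x) B \<partial>\<pi>) =
        (\<integral>\<^sup>+y. indicator B y * emeasure (K y) A \<partial>\<pi>))"

fun kpow :: "'a measure \<Rightarrow> ('a \<Rightarrow> 'a measure) \<Rightarrow> nat \<Rightarrow> 'a \<Rightarrow> 'a measure" where
  "kpow M K 0 = return M"
| "kpow M K (Suc n) = (\<lambda>x. kpow M K n x \<bind> K)"

definition law_n :: "'a measure \<Rightarrow> ('a \<Rightarrow> 'a measure) \<Rightarrow> 'a measure \<Rightarrow> nat \<Rightarrow> 'a measure" where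
  "law_n M K \<mu>0 n = \<mu>0 \<bind> kpow M K n"

definition chi2 :: "'a measure \<Rightarrow> 'a measure \<Rightarrow> ennreal" where
  "chi2 \<pi> \<mu> = (\<integral>\<^sup>+x. ennreal ((enn2real (RN_deriv \<pi> \<mu> x) - 1)\<^sup>2) \<partial>\<pi>)"

definition dirichlet :: "'a measure \<Rightarrow> ('a \<Rightarrow> 'a measure) \<Rightarrow> ('a \<Rightarrow> real) \<Rightarrow> ennreal" where
  "dirichlet \<pi> P g = (\<integral>\<^sup>+x. (\<integral>\<^sup>+y. ennreal ((g x - g y)\<^sup>2) \<partial>(P x)) \<partial>\<pi>) / 2"

end

theory Submission
  imports Defs
begin

text \<open>Let P be the Markov operator of K. Reversibility makes P self-adjoint on L2(pi), and
  the density of mu_n is h_n = P^n h_0, so c_n := chi(mu_n||pi)^2 = ||h_n||^2 - 1. Self-adjointness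
  gives ||h_(m+1)||^2 = <h_m, h_(m+2)>, hence <h_m - 1, h_(m+2) - 1> = c_(m+1), and Cauchy-Schwarz
  yields the log-convexity c_(m+1)^2 <= c_m c_(m+2). Thus the ratios c_(n+1)/c_n increase and
  c_n >= c_0 (c_1/c_0)^n. Finally c_0 - c_1 = ||h_0||^2 - <h_0, P^2 h_0> = E_(K^2)(h_0, h_0).\<close>

lemma log_convex_ge_geometric:
  fixes c :: "nat \<Rightarrow> real"
  assumes nonneg: "\<And>n. 0 \<le> c n" and log_convex: "\<And>m. (c (Suc m))\<^sup>2 \<le> c m * c (Suc (Suc m))"
  shows "c 0 * (c 1 / c 0) ^ n \<le> c n"
proof (cases "c 0 = 0")
  case True
  then show ?thesis using nonneg by simp
next
  case False
  then have c0: "0 < c 0" using nonneg[of 0] by simp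
  define r where "r = c 1 / c 0"
  have r0: "0 \<le> r" using nonneg c0 by (simp add: r_def)
  have ratio: "r * c n \<le> c (Suc n)" for n
  proof (induction n)
    case 0
    then show ?case using c0 by (simp add: r_def)
  next
    case (Suc n)
    show ?case
    proof (cases "c n = 0")
      case True
      then have "(c (Suc n))\<^sup>2 \<le> 0" using log_convex[of n] by simp
      then show ?thesis using nonneg[of "Suc (Suc n)"] r0 by simp
    next
      case False
      have "c n * (r * c (Suc n)) = (r * c n) * c (Suc n)" by simp
      also have "\<dots> \<le> c (Suc n) * c (Suc n)" by (rule mult_right_mono[OF Suc nonneg])
      also have "\<dots> \<le> c n * c (Suc (Suc n))" using log_convex[of n] by (simp add: power2_eq_square)
      finally show ?thesis using False nonneg[of n] by simp
    qed
  qed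
  have "c 0 * r ^ n \<le> c n" for n
  proof (induction n)
    case (Suc n)
    have "c 0 * r ^ Suc n = r * (c 0 * r ^ n)" by simp
    also have "\<dots> \<le> r * c n" by (rule mult_left_mono[OF Suc r0])
    also have "\<dots> \<le> c (Suc n)" by (rule ratio)
    finally show ?case .
  qed simp
  then show ?thesis by (simp add: r_def)
qed

lemma ennreal_sq_minus_one_add:
  assumes "0 \<le> (v::real)"
  shows "ennreal ((v - 1)\<^sup>2) + 2 * ennreal v = ennreal (v\<^sup>2) + 1"
proof -
  have "ennreal ((v - 1)\<^sup>2) + 2 * ennreal v = ennreal ((v - 1)\<^sup>2 + 2 * v)"
    using assms by (simp add: ennreal_mult)
  also have "(v - 1)\<^sup>2 + 2 * v = v\<^sup>2 + 1" by (simp add: power2_eq_square algebra_simps)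
  finally show ?thesis by simp
qed

lemma ennreal_sq_diff_add:
  assumes "0 \<le> (a::real)" "0 \<le> b"
  shows "ennreal ((a - b)\<^sup>2) + 2 * (ennreal a * ennreal b) = ennreal a ^ 2 + ennreal b ^ 2"
proof -
  have "ennreal ((a - b)\<^sup>2) + 2 * (ennreal a * ennreal b) = ennreal ((a - b)\<^sup>2 + 2 * (a * b))"
    using assms by (simp add: ennreal_mult)
  also have "(a - b)\<^sup>2 + 2 * (a * b) = a ^ 2 + b ^ 2" by (simp add: power2_eq_square algebra_simps)
  finally show ?thesis using assms by (simp add: ennreal_power)
qed

lemma ennreal_mult_add_one_le:
  assumes "0 \<le> (a::real)" "0 \<le> b"
  shows "ennreal (a * b) + 1 \<le> ennreal (\<bar>a - 1\<bar> * \<bar>b - 1\<bar>) + ennreal a + ennreal b"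
proof -
  have "(a - 1) * (b - 1) \<le> \<bar>a - 1\<bar> * \<bar>b - 1\<bar>" by (metis abs_ge_self abs_mult)
  then have "a * b + 1 \<le> \<bar>a - 1\<bar> * \<bar>b - 1\<bar> + a + b" by (simp add: algebra_simps)
  then have "ennreal (a * b + 1) \<le> ennreal (\<bar>a - 1\<bar> * \<bar>b - 1\<bar> + a + b)" by (rule ennreal_leI)
  then show ?thesis using assms by simp
qed

primrec markov_op_pow :: "('a \<Rightarrow> 'a measure) \<Rightarrow> nat \<Rightarrow> ('a \<Rightarrow> ennreal) \<Rightarrow> 'a \<Rightarrow> ennreal" where
  "markov_op_pow K 0 g = g"
| "markov_op_pow K (Suc n) g = (\<lambda>x. \<integral>\<^sup>+y. markov_op_pow K n g y \<partial>K x)"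

locale reversible_markov_kernel =
  fixes \<pi> :: "'a measure" and K :: "'a \<Rightarrow> 'a measure"
  assumes prob_space: "prob_space \<pi>"
    and kernel: "K \<in> \<pi> \<rightarrow>\<^sub>M prob_algebra \<pi>"
    and reversible: "reversible \<pi> K"
begin

lemma kernel_subprob[measurable]: "K \<in> \<pi> \<rightarrow>\<^sub>M subprob_algebra \<pi>"
  using kernel by (rule measurable_prob_algebraD)

lemma prob_space_kernel: "x \<in> space \<pi> \<Longrightarrow> prob_space (K x)"
  and sets_kernel: "x \<in> space \<pi> \<Longrightarrow> sets (K x) = sets \<pi>"
  using measurable_space[OF kernel] by (auto simp: space_prob_algebra)

lemma emeasure_kernel_space: "x \<in> space \<pi> \<Longrightarrow> emeasure (K x) (space (K x)) = 1"
  using prob_space.emeasure_space_1[OF prob_space_kernel] .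

lemma measurable_nn_integral_kernel[measurable]:
  "g \<in> borel_measurable \<pi> \<Longrightarrow> (\<lambda>x. \<integral>\<^sup>+y. g y \<partial>K x) \<in> borel_measurable \<pi>"
  by (rule measurable_compose[OF kernel_subprob nn_integral_measurable_subprob_algebra])

lemma measurable_markov_op_pow[measurable]:
  "g \<in> borel_measurable \<pi> \<Longrightarrow> markov_op_pow K n g \<in> borel_measurable \<pi>"
  by (induction n) auto

lemma kernel_subprob_density: "K \<in> density \<pi> g \<rightarrow>\<^sub>M subprob_algebra \<pi>"
  using kernel_subprob by (simp cong: measurable_cong_sets)

lemma sets_bind_density: "sets (density \<pi> g \<bind> K) = sets \<pi>"
  using prob_space.not_empty[OF prob_space] by (subst sets_bind) (auto simp: sets_kernel)

lemma emeasure_bind_density: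
  assumes [measurable]: "g \<in> borel_measurable \<pi>" and A: "A \<in> sets \<pi>"
  shows "emeasure (density \<pi> g \<bind> K) A = (\<integral>\<^sup>+x. g x * emeasure (K x) A \<partial>\<pi>)"
proof -
  have [measurable]: "(\<lambda>x. emeasure (K x) A) \<in> borel_measurable \<pi>"
    using measurable_emeasure_kernel[OF kernel_subprob A] .
  show ?thesis
    using prob_space.not_empty[OF prob_space]
    by (subst emeasure_bind[OF _ kernel_subprob_density A]) (auto simp: nn_integral_density)
qed

lemma nn_integral_bind_density:
  assumes [measurable]: "g \<in> borel_measurable \<pi>" "f \<in> borel_measurable \<pi>"
  shows "(\<integral>\<^sup>+y. f y \<partial>(density \<pi> g \<bind> K)) = (\<integral>\<^sup>+x. g x * (\<integral>\<^sup>+y. f y \<partial>K x) \<partial>\<pi>)"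
  by (subst nn_integral_bind[OF _ kernel_subprob_density]) (auto simp: nn_integral_density)

text \<open>The only use of reversibility.\<close>
lemma bind_density_indicator:
  assumes B: "B \<in> sets \<pi>"
  shows "density \<pi> (indicator B) \<bind> K = density \<pi> (\<lambda>y. emeasure (K y) B)"
proof (rule measure_eqI)
  fix A assume "A \<in> sets (density \<pi> (indicator B) \<bind> K)"
  then have A: "A \<in> sets \<pi>" by (simp add: sets_bind_density)
  have "emeasure (density \<pi> (indicator B) \<bind> K) A = (\<integral>\<^sup>+x. indicator B x * emeasure (K x) A \<partial>\<pi>)"
    using A B by (simp add: emeasure_bind_density)
  also have "\<dots> = (\<integral>\<^sup>+x. indicator A x * emeasure (K x) B \<partial>\<pi>)"
    using reversible A B unfolding reversible_def by auto
  also have "\<dots> = emeasure (density \<pi> (\<lambda>y. emeasure (K y) B)) A"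
    using A B by (simp add: emeasure_density mult.commute)
  finally show "emeasure (density \<pi> (indicator B) \<bind> K) A = emeasure (density \<pi> (\<lambda>y. emeasure (K y) B)) A" .
qed (simp add: sets_bind_density)

lemma nn_integral_indicator_kernel:
  assumes A: "A \<in> sets \<pi>" and [measurable]: "g \<in> borel_measurable \<pi>"
  shows "(\<integral>\<^sup>+x. indicator A x * (\<integral>\<^sup>+y. g y \<partial>K x) \<partial>\<pi>) = (\<integral>\<^sup>+x. g x * emeasure (K x) A \<partial>\<pi>)"
proof -
  have "(\<integral>\<^sup>+x. indicator A x * (\<integral>\<^sup>+y. g y \<partial>K x) \<partial>\<pi>) = (\<integral>\<^sup>+y. g y \<partial>(density \<pi> (indicator A) \<bind> K))"
    using A by (simp add: nn_integral_bind_density)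
  also have "\<dots> = (\<integral>\<^sup>+x. emeasure (K x) A * g x \<partial>\<pi>)"
    using A by (simp add: bind_density_indicator nn_integral_density)
  finally show ?thesis by (simp add: mult.commute)
qed

lemma bind_density:
  assumes [measurable]: "g \<in> borel_measurable \<pi>"
  shows "density \<pi> g \<bind> K = density \<pi> (\<lambda>x. \<integral>\<^sup>+y. g y \<partial>K x)"
proof (rule measure_eqI)
  fix A assume "A \<in> sets (density \<pi> g \<bind> K)"
  then have "A \<in> sets \<pi>" by (simp add: sets_bind_density)
  then show "emeasure (density \<pi> g \<bind> K) A = emeasure (density \<pi> (\<lambda>x. \<integral>\<^sup>+y. g y \<partial>K x)) A"
    by (simp add: emeasure_bind_density emeasure_density nn_integral_indicator_kernel mult.commute)
qed (simp add: sets_bind_density)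

lemma nn_integral_kernel_symmetric:
  assumes [measurable]: "f \<in> borel_measurable \<pi>" "g \<in> borel_measurable \<pi>"
  shows "(\<integral>\<^sup>+x. f x * (\<integral>\<^sup>+y. g y \<partial>K x) \<partial>\<pi>) = (\<integral>\<^sup>+x. g x * (\<integral>\<^sup>+y. f y \<partial>K x) \<partial>\<pi>)"
proof -
  have "(\<integral>\<^sup>+x. f x * (\<integral>\<^sup>+y. g y \<partial>K x) \<partial>\<pi>) = (\<integral>\<^sup>+x. f x \<partial>(density \<pi> g \<bind> K))"
    by (simp add: bind_density nn_integral_density mult.commute)
  also have "\<dots> = (\<integral>\<^sup>+x. g x * (\<integral>\<^sup>+y. f y \<partial>K x) \<partial>\<pi>)"
    by (simp add: nn_integral_bind_density)
  finally show ?thesis .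
qed

lemma nn_integral_kernel_stationary:
  assumes [measurable]: "g \<in> borel_measurable \<pi>"
  shows "(\<integral>\<^sup>+x. (\<integral>\<^sup>+y. g y \<partial>K x) \<partial>\<pi>) = (\<integral>\<^sup>+x. g x \<partial>\<pi>)"
proof -
  have "(\<integral>\<^sup>+x. (\<integral>\<^sup>+y. g y \<partial>K x) \<partial>\<pi>) = (\<integral>\<^sup>+x. 1 * (\<integral>\<^sup>+y. g y \<partial>K x) \<partial>\<pi>)" by simp
  also have "\<dots> = (\<integral>\<^sup>+x. g x * (\<integral>\<^sup>+y. 1 \<partial>K x) \<partial>\<pi>)" by (rule nn_integral_kernel_symmetric) auto
  also have "\<dots> = (\<integral>\<^sup>+x. g x \<partial>\<pi>)" by (rule nn_integral_cong) (simp add: emeasure_kernel_space)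
  finally show ?thesis .
qed

lemma nn_integral_kernel_sq_le:
  assumes x: "x \<in> space \<pi>" and [measurable]: "g \<in> borel_measurable \<pi>"
  shows "(\<integral>\<^sup>+y. g y \<partial>K x)\<^sup>2 \<le> (\<integral>\<^sup>+y. g y ^ 2 \<partial>K x)"
proof -
  have "g \<in> borel_measurable (K x)" using sets_kernel[OF x] by (simp cong: measurable_cong_sets)
  then have "(\<integral>\<^sup>+y. g y * 1 \<partial>K x)\<^sup>2 \<le> (\<integral>\<^sup>+y. g y ^ 2 \<partial>K x) * (\<integral>\<^sup>+y. 1 ^ 2 \<partial>K x)"
    by (rule Cauchy_Schwarz_nn_integral) simp
  then show ?thesis using emeasure_kernel_space[OF x] by simp
qed

lemma nn_integral_markov_op_pow_sq_mono:
  assumes [measurable]: "g \<in> borel_measurable \<pi>"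
  shows "(\<integral>\<^sup>+x. markov_op_pow K (Suc n) g x ^ 2 \<partial>\<pi>) \<le> (\<integral>\<^sup>+x. markov_op_pow K n g x ^ 2 \<partial>\<pi>)"
proof -
  have "(\<integral>\<^sup>+x. markov_op_pow K (Suc n) g x ^ 2 \<partial>\<pi>)
      \<le> (\<integral>\<^sup>+x. (\<integral>\<^sup>+y. markov_op_pow K n g y ^ 2 \<partial>K x) \<partial>\<pi>)"
    by (auto intro!: nn_integral_mono nn_integral_kernel_sq_le)
  also have "\<dots> = (\<integral>\<^sup>+x. markov_op_pow K n g x ^ 2 \<partial>\<pi>)"
    by (rule nn_integral_kernel_stationary) simp
  finally show ?thesis .
qed

lemma nn_integral_markov_op_pow_Suc_Suc:
  assumes [measurable]: "g \<in> borel_measurable \<pi>"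
  shows "(\<integral>\<^sup>+x. markov_op_pow K m g x * markov_op_pow K (Suc (Suc m)) g x \<partial>\<pi>)
    = (\<integral>\<^sup>+x. markov_op_pow K (Suc m) g x ^ 2 \<partial>\<pi>)"
  using nn_integral_kernel_symmetric[of "markov_op_pow K m g" "markov_op_pow K (Suc m) g"]
  by (simp add: power2_eq_square)

lemma measurable_kpow: "kpow \<pi> K n \<in> \<pi> \<rightarrow>\<^sub>M prob_algebra \<pi>"
proof (induction n)
  case 0
  then show ?case by (simp add: measurable_return_prob_space)
next
  case (Suc n)
  then show ?case using measurable_bind_prob_space[OF Suc kernel] by simp
qed

lemma measurable_kpow_subprob[measurable]: "kpow \<pi> K n \<in> \<pi> \<rightarrow>\<^sub>M subprob_algebra \<pi>"
  by (rule measurable_prob_algebraD[OF measurable_kpow])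

lemma bind_density_kpow:
  assumes [measurable]: "g \<in> borel_measurable \<pi>"
  shows "density \<pi> g \<bind> kpow \<pi> K n = density \<pi> (markov_op_pow K n g)"
proof (induction n)
  case 0
  show ?case using bind_return''[of "density \<pi> g" \<pi>] by simp
next
  case (Suc n)
  have "kpow \<pi> K n \<in> density \<pi> g \<rightarrow>\<^sub>M subprob_algebra \<pi>"
    using measurable_kpow_subprob by (simp cong: measurable_cong_sets)
  then have "density \<pi> g \<bind> kpow \<pi> K (Suc n) = (density \<pi> g \<bind> kpow \<pi> K n) \<bind> K"
    by (simp add: bind_assoc[OF _ kernel_subprob])
  then show ?case using Suc by (simp add: bind_density)
qed

lemma prob_space_kpow: "x \<in> space \<pi> \<Longrightarrow> prob_space (kpow \<pi> K n x)"
  and sets_kpow: "x \<in> space \<pi> \<Longrightarrow> sets (kpow \<pi> K n x) = sets \<pi>"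
  using measurable_space[OF measurable_kpow] by (auto simp: space_prob_algebra)

lemma nn_integral_kpow_2:
  assumes x: "x \<in> space \<pi>" and [measurable]: "g \<in> borel_measurable \<pi>"
  shows "(\<integral>\<^sup>+y. g y \<partial>kpow \<pi> K 2 x) = (\<integral>\<^sup>+z. (\<integral>\<^sup>+y. g y \<partial>K z) \<partial>K x)"
proof -
  have kpow_2: "kpow \<pi> K 2 x = K x \<bind> K"
    by (simp add: numeral_2_eq_2 bind_return[OF kernel_subprob x])
  have "K \<in> K x \<rightarrow>\<^sub>M subprob_algebra \<pi>"
    using kernel_subprob sets_kernel[OF x] by (simp cong: measurable_cong_sets)
  then show ?thesis unfolding kpow_2 by (rule nn_integral_bind[OF assms(2)])
qed

lemma nn_integral_kpow_2_sq_diff: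
  assumes x: "x \<in> space \<pi>" and [measurable]: "g \<in> borel_measurable \<pi>" and nonneg: "\<And>y. 0 \<le> g y"
  shows "(\<integral>\<^sup>+y. ennreal ((g x - g y)\<^sup>2) \<partial>kpow \<pi> K 2 x) + 2 * (ennreal (g x) * (\<integral>\<^sup>+y. g y \<partial>kpow \<pi> K 2 x))
    = ennreal (g x) ^ 2 + (\<integral>\<^sup>+y. ennreal (g y) ^ 2 \<partial>kpow \<pi> K 2 x)"
proof -
  have [measurable_cong]: "sets (kpow \<pi> K 2 x) = sets \<pi>" using sets_kpow[OF x] .
  have "(\<integral>\<^sup>+y. ennreal ((g x - g y)\<^sup>2) \<partial>kpow \<pi> K 2 x) + 2 * (ennreal (g x) * (\<integral>\<^sup>+y. g y \<partial>kpow \<pi> K 2 x))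
      = (\<integral>\<^sup>+y. ennreal ((g x - g y)\<^sup>2) + 2 * (ennreal (g x) * ennreal (g y)) \<partial>kpow \<pi> K 2 x)"
    by (simp add: nn_integral_add nn_integral_cmult mult.assoc)
  also have "\<dots> = (\<integral>\<^sup>+y. ennreal (g x) ^ 2 + ennreal (g y) ^ 2 \<partial>kpow \<pi> K 2 x)"
    by (simp add: ennreal_sq_diff_add nonneg)
  also have "\<dots> = ennreal (g x) ^ 2 + (\<integral>\<^sup>+y. ennreal (g y) ^ 2 \<partial>kpow \<pi> K 2 x)"
    using prob_space.emeasure_space_1[OF prob_space_kpow[OF x]]
    by (simp add: nn_integral_add)
  finally show ?thesis .
qed

lemma nn_integral_kpow_2_stationary:
  assumes [measurable]: "g \<in> borel_measurable \<pi>"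
  shows "(\<integral>\<^sup>+x. (\<integral>\<^sup>+y. g y \<partial>kpow \<pi> K 2 x) \<partial>\<pi>) = (\<integral>\<^sup>+x. g x \<partial>\<pi>)"
proof -
  have "(\<integral>\<^sup>+x. (\<integral>\<^sup>+y. g y \<partial>kpow \<pi> K 2 x) \<partial>\<pi>) = (\<integral>\<^sup>+x. (\<integral>\<^sup>+z. (\<integral>\<^sup>+y. g y \<partial>K z) \<partial>K x) \<partial>\<pi>)"
    by (rule nn_integral_cong) (simp add: nn_integral_kpow_2)
  also have "\<dots> = (\<integral>\<^sup>+x. g x \<partial>\<pi>)"
    by (simp add: nn_integral_kernel_stationary)
  finally show ?thesis .
qed

text \<open>Expanding the square gives ||g||^2 - <g, P^2 g>, and <g, P^2 g> = ||P g||^2 by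
  self-adjointness.\<close>
lemma dirichlet_kpow_2:
  assumes [measurable]: "g \<in> borel_measurable \<pi>" and nonneg: "\<And>x. 0 \<le> g x"
  shows "dirichlet \<pi> (kpow \<pi> K 2) g + (\<integral>\<^sup>+x. markov_op_pow K 1 (\<lambda>x. ennreal (g x)) x ^ 2 \<partial>\<pi>)
    = (\<integral>\<^sup>+x. ennreal (g x) ^ 2 \<partial>\<pi>)"
proof -
  let ?G = "\<lambda>x. ennreal (g x)"
  have [measurable]: "(\<lambda>x. \<integral>\<^sup>+y. ennreal ((g x - g y)\<^sup>2) \<partial>kpow \<pi> K 2 x) \<in> borel_measurable \<pi>"
    by (rule nn_integral_measurable_subprob_algebra2[OF _ measurable_kpow_subprob]) measurable
  have inner: "(\<integral>\<^sup>+x. ?G x * markov_op_pow K 2 ?G x \<partial>\<pi>) = (\<integral>\<^sup>+x. markov_op_pow K 1 ?G x ^ 2 \<partial>\<pi>)"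
    using nn_integral_markov_op_pow_Suc_Suc[of ?G 0] by (simp add: numeral_2_eq_2)
  have P2: "markov_op_pow K 2 ?G x = (\<integral>\<^sup>+y. ?G y \<partial>kpow \<pi> K 2 x)" if "x \<in> space \<pi>" for x
    by (subst nn_integral_kpow_2[OF that]) (simp_all add: numeral_2_eq_2)
  have "(\<integral>\<^sup>+x. (\<integral>\<^sup>+y. ennreal ((g x - g y)\<^sup>2) \<partial>kpow \<pi> K 2 x) \<partial>\<pi>)
      + 2 * (\<integral>\<^sup>+x. ?G x * markov_op_pow K 2 ?G x \<partial>\<pi>)
      = (\<integral>\<^sup>+x. (\<integral>\<^sup>+y. ennreal ((g x - g y)\<^sup>2) \<partial>kpow \<pi> K 2 x)
          + 2 * (?G x * markov_op_pow K 2 ?G x) \<partial>\<pi>)"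
    by (simp add: nn_integral_add nn_integral_cmult del: markov_op_pow.simps)
  also have "\<dots> = (\<integral>\<^sup>+x. ?G x ^ 2 + (\<integral>\<^sup>+y. ?G y ^ 2 \<partial>kpow \<pi> K 2 x) \<partial>\<pi>)"
    by (rule nn_integral_cong) (simp only: P2 nn_integral_kpow_2_sq_diff[OF _ assms(1) nonneg])
  also have "\<dots> = (\<integral>\<^sup>+x. ?G x ^ 2 \<partial>\<pi>) + (\<integral>\<^sup>+x. (\<integral>\<^sup>+y. ?G y ^ 2 \<partial>kpow \<pi> K 2 x) \<partial>\<pi>)"
    by (rule nn_integral_add) simp_all
  also have "(\<integral>\<^sup>+x. (\<integral>\<^sup>+y. ?G y ^ 2 \<partial>kpow \<pi> K 2 x) \<partial>\<pi>) = (\<integral>\<^sup>+x. ?G x ^ 2 \<partial>\<pi>)"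
    by (rule nn_integral_kpow_2_stationary) simp
  finally have sum: "(\<integral>\<^sup>+x. (\<integral>\<^sup>+y. ennreal ((g x - g y)\<^sup>2) \<partial>kpow \<pi> K 2 x) \<partial>\<pi>)
      + 2 * (\<integral>\<^sup>+x. markov_op_pow K 1 ?G x ^ 2 \<partial>\<pi>) = 2 * (\<integral>\<^sup>+x. ?G x ^ 2 \<partial>\<pi>)"
    by (simp add: inner mult_2)
  have half: "2 * a / 2 = a" for a :: ennreal
    using mult_divide_eq_ennreal[of 2 a] by (simp add: mult.commute)
  show ?thesis
    using arg_cong[OF sum, of "\<lambda>a. a / 2"]
    by (simp add: dirichlet_def add_divide_distrib_ennreal half)
qed

end

locale reversible_chain_chi2 = reversible_markov_kernel +
  fixes \<mu>0 :: "'a measure"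
  assumes initial_law: "\<mu>0 \<in> space (prob_algebra \<pi>)"
    and absolutely_continuous: "absolutely_continuous \<pi> \<mu>0"
    and chi2_finite: "chi2 \<pi> \<mu>0 < \<infinity>"
begin

definition h0 :: "'a \<Rightarrow> real" where
  "h0 x = enn2real (RN_deriv \<pi> \<mu>0 x)"

abbreviation dens :: "nat \<Rightarrow> 'a \<Rightarrow> ennreal" where
  "dens n \<equiv> markov_op_pow K n (\<lambda>x. ennreal (h0 x))"

definition real_dens :: "nat \<Rightarrow> 'a \<Rightarrow> real" where
  "real_dens n x = enn2real (dens n x)"

definition sq_norm :: "nat \<Rightarrow> ennreal" where
  "sq_norm n = (\<integral>\<^sup>+x. dens n x ^ 2 \<partial>\<pi>)"

definition chi_sq :: "nat \<Rightarrow> ennreal" where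
  "chi_sq n = (\<integral>\<^sup>+x. ennreal ((real_dens n x - 1)\<^sup>2) \<partial>\<pi>)"

lemma measurable_h0[measurable]: "h0 \<in> borel_measurable \<pi>"
  unfolding h0_def[abs_def] by measurable

lemma measurable_real_dens[measurable]: "real_dens n \<in> borel_measurable \<pi>"
  unfolding real_dens_def[abs_def] by measurable

lemma h0_nonneg: "0 \<le> h0 x"
  by (simp add: h0_def)

lemma real_dens_nonneg: "0 \<le> real_dens n x"
  by (simp add: real_dens_def)

lemma sets_initial_law: "sets \<mu>0 = sets \<pi>"
  using initial_law by (auto simp: space_prob_algebra)

lemma initial_law_density: "\<mu>0 = density \<pi> (dens 0)"
proof -
  interpret prob_space \<pi> by (rule prob_space)
  interpret \<mu>0: prob_space \<mu>0 using initial_law by (auto simp: space_prob_algebra)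
  have "AE x in \<pi>. RN_deriv \<pi> \<mu>0 x \<noteq> \<infinity>"
    by (rule RN_deriv_finite[OF _ absolutely_continuous sets_initial_law])
      (simp add: \<mu>0.sigma_finite_measure_axioms)
  then have ae: "AE x in \<pi>. RN_deriv \<pi> \<mu>0 x = dens 0 x"
    by eventually_elim (simp add: h0_def less_top)
  have "density \<pi> (RN_deriv \<pi> \<mu>0) = density \<pi> (dens 0)"
    by (rule density_cong) (use ae in auto)
  then show ?thesis
    using density_RN_deriv[OF absolutely_continuous sets_initial_law] by simp
qed

lemma law_n_density: "law_n \<pi> K \<mu>0 n = density \<pi> (dens n)"
  unfolding law_n_def by (subst initial_law_density) (simp add: bind_density_kpow)

lemma nn_integral_dens: "(\<integral>\<^sup>+x. dens n x \<partial>\<pi>) = 1"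
proof -
  have "prob_space (law_n \<pi> K \<mu>0 n)"
    unfolding law_n_def by (rule prob_space_bind'[OF initial_law measurable_kpow])
  then have "emeasure (density \<pi> (dens n)) (space \<pi>) = 1"
    by (metis law_n_density prob_space.emeasure_space_1 space_density)
  then show ?thesis by (simp add: emeasure_density)
qed

lemma AE_dens_eq_real_dens: "AE x in \<pi>. dens n x = ennreal (real_dens n x)"
proof -
  have "AE x in \<pi>. dens n x \<noteq> \<infinity>"
    by (rule nn_integral_PInf_AE) (auto simp: nn_integral_dens)
  then show ?thesis by eventually_elim (auto simp: real_dens_def less_top)
qed

lemma nn_integral_real_dens: "(\<integral>\<^sup>+x. ennreal (real_dens n x) \<partial>\<pi>) = 1"
  using AE_dens_eq_real_dens[of n]
  by (subst nn_integral_dens[of n, symmetric]) (auto intro!: nn_integral_cong_AE)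

lemma sq_norm_real_dens: "sq_norm n = (\<integral>\<^sup>+x. ennreal ((real_dens n x)\<^sup>2) \<partial>\<pi>)"
  unfolding sq_norm_def
  by (rule nn_integral_cong_AE)
    (use AE_dens_eq_real_dens[of n] in \<open>eventually_elim, simp add: ennreal_power real_dens_nonneg\<close>)

lemma chi2_law_n: "chi2 \<pi> (law_n \<pi> K \<mu>0 n) = chi_sq n"
proof -
  interpret prob_space \<pi> by (rule prob_space)
  have "AE x in \<pi>. dens n x = RN_deriv \<pi> (density \<pi> (dens n)) x"
    by (rule RN_deriv_unique) simp_all
  then show ?thesis
    unfolding law_n_density chi2_def chi_sq_def
    by (auto intro!: nn_integral_cong_AE elim!: eventually_mono simp: real_dens_def)
qed

lemma chi2_initial: "chi2 \<pi> \<mu>0 = chi_sq 0"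
  by (simp add: chi2_def chi_sq_def real_dens_def h0_def)

lemma chi_sq_add_two: "chi_sq n + 2 = sq_norm n + 1"
proof -
  have emeasure_1: "emeasure \<pi> (space \<pi>) = 1"
    by (rule prob_space.emeasure_space_1[OF prob_space])
  have "chi_sq n + 2 * 1 = (\<integral>\<^sup>+x. ennreal ((real_dens n x - 1)\<^sup>2) + 2 * ennreal (real_dens n x) \<partial>\<pi>)"
    unfolding chi_sq_def by (simp add: nn_integral_add nn_integral_cmult nn_integral_real_dens)
  also have "\<dots> = (\<integral>\<^sup>+x. ennreal ((real_dens n x)\<^sup>2) + 1 \<partial>\<pi>)"
    by (simp add: ennreal_sq_minus_one_add real_dens_nonneg)
  also have "\<dots> = sq_norm n + 1"
    by (simp add: nn_integral_add sq_norm_real_dens emeasure_1)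
  finally show ?thesis by simp
qed

lemma sq_norm_finite: "sq_norm n < \<infinity>"
proof (induction n)
  case 0
  have "sq_norm 0 + 1 = chi_sq 0 + 2" by (simp add: chi_sq_add_two)
  then show ?case using chi2_finite chi2_initial
    by (metis ennreal_add_eq_top infinity_ennreal_def less_top top_neq_numeral)
next
  case (Suc n)
  then show ?case
    using nn_integral_markov_op_pow_sq_mono[of "\<lambda>x. ennreal (h0 x)" n]
    by (simp add: sq_norm_def del: markov_op_pow.simps)
qed

lemma chi_sq_finite: "chi_sq n < \<infinity>"
proof -
  have "chi_sq n \<le> chi_sq n + 2" by simp
  also have "\<dots> = sq_norm n + 1" by (rule chi_sq_add_two)
  also have "\<dots> < \<infinity>" using sq_norm_finite[of n] by (simp add: less_top)
  finally show ?thesis .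
qed

text \<open>By self-adjointness the inner product of h_m - 1 and h_(m+2) - 1 is
  ||h_(m+1)||^2 - 1 = chi_sq (m+1); bounding it by absolute values keeps the integrands nonnegative.\<close>
lemma chi_sq_le_abs_inner:
  "chi_sq (Suc m) \<le> (\<integral>\<^sup>+x. ennreal \<bar>real_dens m x - 1\<bar> * ennreal \<bar>real_dens (Suc (Suc m)) x - 1\<bar> \<partial>\<pi>)"
    (is "_ \<le> ?I")
proof -
  have emeasure_1: "emeasure \<pi> (space \<pi>) = 1"
    by (rule prob_space.emeasure_space_1[OF prob_space])
  have "(\<integral>\<^sup>+x. ennreal (real_dens m x * real_dens (Suc (Suc m)) x) \<partial>\<pi>)
      = (\<integral>\<^sup>+x. dens m x * dens (Suc (Suc m)) x \<partial>\<pi>)"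
    by (rule nn_integral_cong_AE)
      (use AE_dens_eq_real_dens[of m] AE_dens_eq_real_dens[of "Suc (Suc m)"] in
        \<open>eventually_elim, simp add: ennreal_mult real_dens_nonneg del: markov_op_pow.simps\<close>)
  also have "\<dots> = sq_norm (Suc m)"
    unfolding sq_norm_def by (rule nn_integral_markov_op_pow_Suc_Suc) simp
  finally have inner: "(\<integral>\<^sup>+x. ennreal (real_dens m x * real_dens (Suc (Suc m)) x) \<partial>\<pi>) = sq_norm (Suc m)" .
  have "sq_norm (Suc m) + 1 = (\<integral>\<^sup>+x. ennreal (real_dens m x * real_dens (Suc (Suc m)) x) + 1 \<partial>\<pi>)"
    unfolding inner[symmetric] using emeasure_1 by (simp add: nn_integral_add)
  also have "\<dots> \<le> (\<integral>\<^sup>+x. ennreal (\<bar>real_dens m x - 1\<bar> * \<bar>real_dens (Suc (Suc m)) x - 1\<bar>)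
      + ennreal (real_dens m x) + ennreal (real_dens (Suc (Suc m)) x) \<partial>\<pi>)"
    by (intro nn_integral_mono ennreal_mult_add_one_le real_dens_nonneg)
  also have "\<dots> = ?I + 2"
    by (simp add: nn_integral_add nn_integral_real_dens ennreal_mult one_add_one[symmetric] add.assoc
        del: one_add_one)
  finally have "2 + chi_sq (Suc m) \<le> 2 + ?I"
    using chi_sq_add_two[of "Suc m"] by (simp add: add.commute)
  then show ?thesis
    by (metis ennreal_add_left_cancel_le top_neq_numeral infinity_ennreal_def)
qed

lemma chi_sq_log_convex: "(chi_sq (Suc m))\<^sup>2 \<le> chi_sq m * chi_sq (Suc (Suc m))"
proof -
  have "(chi_sq (Suc m))\<^sup>2
      \<le> (\<integral>\<^sup>+x. ennreal \<bar>real_dens m x - 1\<bar> * ennreal \<bar>real_dens (Suc (Suc m)) x - 1\<bar> \<partial>\<pi>)\<^sup>2"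
    by (rule power_mono_ennreal[OF chi_sq_le_abs_inner])
  also have "\<dots> \<le> (\<integral>\<^sup>+x. ennreal \<bar>real_dens m x - 1\<bar> ^ 2 \<partial>\<pi>)
      * (\<integral>\<^sup>+x. ennreal \<bar>real_dens (Suc (Suc m)) x - 1\<bar> ^ 2 \<partial>\<pi>)"
    by (rule Cauchy_Schwarz_nn_integral) simp_all
  also have "\<dots> = chi_sq m * chi_sq (Suc (Suc m))"
    unfolding chi_sq_def by (simp add: ennreal_power)
  finally show ?thesis .
qed

definition c :: "nat \<Rightarrow> real" where
  "c n = enn2real (chi_sq n)"

lemma c_nonneg: "0 \<le> c n"
  by (simp add: c_def)

lemma c_log_convex: "(c (Suc m))\<^sup>2 \<le> c m * c (Suc (Suc m))"
proof -
  have "enn2real ((chi_sq (Suc m))\<^sup>2) \<le> enn2real (chi_sq m * chi_sq (Suc (Suc m)))"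
    by (rule enn2real_mono[OF chi_sq_log_convex]) (use chi_sq_finite in \<open>simp add: ennreal_mult_less_top\<close>)
  then show ?thesis by (simp add: c_def power2_eq_square enn2real_mult)
qed

lemma enn2real_sq_norm: "enn2real (sq_norm n) = c n + 1"
  using arg_cong[OF chi_sq_add_two[of n], of enn2real] chi_sq_finite[of n] sq_norm_finite[of n]
  by (simp add: enn2real_plus c_def)

lemma enn2real_dirichlet: "enn2real (dirichlet \<pi> (kpow \<pi> K 2) h0) = c 0 - c 1"
proof -
  have sum: "dirichlet \<pi> (kpow \<pi> K 2) h0 + sq_norm 1 = sq_norm 0"
    using dirichlet_kpow_2[OF measurable_h0 h0_nonneg] by (simp add: sq_norm_def)
  have "dirichlet \<pi> (kpow \<pi> K 2) h0 \<le> sq_norm 0"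
    unfolding sum[symmetric] by simp
  then have "dirichlet \<pi> (kpow \<pi> K 2) h0 < \<infinity>"
    using sq_norm_finite[of 0] by (rule le_less_trans)
  then have "enn2real (dirichlet \<pi> (kpow \<pi> K 2) h0) + enn2real (sq_norm 1) = enn2real (sq_norm 0)"
    using arg_cong[OF sum, of enn2real] sq_norm_finite[of 1] by (simp add: enn2real_plus)
  then show ?thesis by (simp add: enn2real_sq_norm)
qed

end

theorem theorem4:
  fixes \<pi> \<mu>0 :: "'a measure" and K :: "'a \<Rightarrow> 'a measure" and n :: nat
  assumes "prob_space \<pi>"
    and "K \<in> \<pi> \<rightarrow>\<^sub>M prob_algebra \<pi>"
    and "reversible \<pi> K"
    and "\<mu>0 \<in> space (prob_algebra \<pi>)"
    and "absolutely_continuous \<pi> \<mu>0"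
    and "chi2 \<pi> \<mu>0 < \<infinity>"
  shows "enn2real (chi2 \<pi> (law_n \<pi> K \<mu>0 n))
     \<ge> enn2real (chi2 \<pi> \<mu>0) *
        (1 - enn2real (dirichlet \<pi> (kpow \<pi> K 2) (\<lambda>x. enn2real (RN_deriv \<pi> \<mu>0 x)))
               / enn2real (chi2 \<pi> \<mu>0)) ^ n"
proof -
  interpret reversible_chain_chi2 \<pi> K \<mu>0
    by (intro reversible_chain_chi2.intro reversible_markov_kernel.intro
        reversible_chain_chi2_axioms.intro) (fact assms)+
  have "c 0 * (1 - (c 0 - c 1) / c 0) ^ n = c 0 * (c 1 / c 0) ^ n"
    by (cases "c 0 = 0") (simp_all add: diff_divide_distrib)
  also have "\<dots> \<le> c n"
    by (rule log_convex_ge_geometric[of c, OF c_nonneg c_log_convex])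
  finally show ?thesis
    using enn2real_dirichlet
    by (simp add: chi2_law_n chi2_initial c_def h0_def[abs_def])
qed

end
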